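(* The following statements are equivalent: (1) $G^{>}_\nu\neq\emptyset$; (2) there exists $(h,\beta)\in\Gamma(\nu)$ with $\{k:\nu_k>h(0)\}\neq\emptyset$; (3) there exists $(h,\beta)\in\Gamma(\nu)$ such that $\mathfrak F_\nu(\mathbf K^s_\nu,h,\beta)$ is finite, and $\nu_{\rm opt}=\max\{\nu_k:k=0,\dots,\mathbf K^s_\nu\}$; (4) there exist $\theta\in\operatorname{Fin}(X^{\rm in})$ and $\gamma\in\mathcal{KL}_{\rm gen}$ such that $\varphi(T^k(x))\le\gamma(\theta(x),k)$ for all $x\in X^{\rm in}$, $k\in\mathbb N$, and $\inf_{t\ge0}\gamma(\overline\theta,t)<\nu_n$ for some $n\in\mathbb N$; (5) there exists an $(X^{\rm in},T,\varphi)$-compatible Opt-Lyapunov function for $(X^{\rm in},T)$.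
   Context: Standing data: nonempty $X^{\rm in}\subseteq\mathbb R^d$, $T:\mathbb R^d\to\mathbb R^d$, $\varphi:\mathbb R^d\to\mathbb R$ with $\varphi(0)=0$; $\nu_k=\sup_{x\in X^{\rm in}}\varphi(T^k(x))$ finite for all $k$, $\nu_{\rm opt}=\sup_k\nu_k$. $G^{>}_\nu=\{k:\nu_k>\limsup_n\nu_n\}$; $\mathbf K^s_\nu=\inf\{k:\max_{0\le j\le k}\nu_j>\sup_{j>k}\nu_j\}$. $\Gamma(\nu)$: pairs $(h,\beta)$ with $h:\mathbb R\to\mathbb R$ strictly increasing continuous on $[0,1]$, $\beta\in(0,1)$, $\nu_k\le h(\beta^k)$ for all $k$. $\mathfrak F_\nu(k,h,\beta)=\ln(h^{-1}_{[0,1]}(\nu_k))/\ln\beta$ if $(h,\beta)\in\Gamma(\nu)$ and $\nu_k>h(0)$, else $+\infty$. $\overline f=\sup_{X^{\rm in}}f$, $\operatorname{Fin}(X^{\rm in})=\{f:\mathbb R^d\to\mathbb R\cup\{+\infty\}:\overline f<+\infty\}$. $\mathcal{KL}_{\rm gen}$: $\gamma:\mathbb R\times\mathbb R_+\to\mathbb R$ increasing in the first variable and decreasing in the second (not necessarily strictly). Opt-Lyapunov function for $(X^{\rm in},T)$: $V:\mathbb R^d\to[0,+\infty]$ with $\sup_{X^{\rm in}}V\in(0,1]$ and $V\circ T\le\lambda V$ for some $\lambda\in(0,1)$. Such $V$ is $(X^{\rm in},T,\varphi)$-compatible if for some $k\in G^{>}_\nu$ there exist $\varepsilon,\eta>0$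 such that for all $x\in X^{\rm in}$, $j\in\mathbb N$ with $\varphi(T^j(x))>\nu_k-\eta$, $V(T^j(x))>\varepsilon$. *)

theory Defs
  imports "HOL-Analysis.Analysis" "HOL-Library.Liminf_Limsup" "HOL-Library.Extended_Real"
    "HOL-Library.Extended_Nat"
begin

definition nu :: "'a set \<Rightarrow> ('a \<Rightarrow> 'a) \<Rightarrow> ('a \<Rightarrow> real) \<Rightarrow> nat \<Rightarrow> real" where
  "nu X T \<phi> k = (SUP x\<in>X. \<phi> ((T ^^ k) x))"

definition nu_opt :: "(nat \<Rightarrow> real) \<Rightarrow> ereal" where
  "nu_opt \<nu> = (SUP k. ereal (\<nu> k))"

definition Ggt :: "(nat \<Rightarrow> real) \<Rightarrow> nat set" where
  "Ggt \<nu> = {k. ereal (\<nu> k) > limsup (\<lambda>n. ereal (\<nu> n))}"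

text \<open>K^s_nu = inf {k. max_{j<=k} nu_j > sup_{j>k} nu_j}; inf of the empty set is infinity.\<close>
definition Ks :: "(nat \<Rightarrow> real) \<Rightarrow> enat" where
  "Ks \<nu> = Inf (enat ` {k. ereal (Max (\<nu> ` {0..k})) > (SUP j\<in>{k<..}. ereal (\<nu> j))})"

definition Gamma :: "(nat \<Rightarrow> real) \<Rightarrow> ((real \<Rightarrow> real) \<times> real) set" where
  "Gamma \<nu> = {(h, \<beta>). strict_mono_on {0..1} h \<and> continuous_on {0..1} h \<and>
      0 < \<beta> \<and> \<beta> < 1 \<and> (\<forall>k. \<nu> k \<le> h (\<beta> ^ k))}"

definition frakF :: "(nat \<Rightarrow> real) \<Rightarrow> nat \<Rightarrow> (real \<Rightarrow> real) \<Rightarrow> real \<Rightarrow> ereal" where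
  "frakF \<nu> k h \<beta> = (if (h, \<beta>) \<in> Gamma \<nu> \<and> \<nu> k > h 0
      then ereal (ln (the_inv_into {0..1} h (\<nu> k)) / ln \<beta>) else \<infinity>)"

definition Fin :: "'a set \<Rightarrow> ('a \<Rightarrow> ereal) set" where
  "Fin X = {f. (\<forall>x. f x \<noteq> -\<infinity>) \<and> (SUP x\<in>X. f x) < \<infinity>}"

definition KLgen :: "(real \<Rightarrow> real \<Rightarrow> real) set" where
  "KLgen = {\<gamma>. (\<forall>t\<ge>0. mono (\<lambda>s. \<gamma> s t)) \<and> (\<forall>s. antimono_on {0..} (\<gamma> s))}"

definition opt_lyapunov :: "'a set \<Rightarrow> ('a \<Rightarrow> 'a) \<Rightarrow> ('a \<Rightarrow> ereal) \<Rightarrow> bool" where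
  "opt_lyapunov X T V \<longleftrightarrow> (\<forall>x. V x \<ge> 0) \<and>
     0 < (SUP x\<in>X. V x) \<and> (SUP x\<in>X. V x) \<le> 1 \<and>
     (\<exists>lam::real. 0 < lam \<and> lam < 1 \<and> (\<forall>x. V (T x) \<le> ereal lam * V x))"

definition compatible :: "'a set \<Rightarrow> ('a \<Rightarrow> 'a) \<Rightarrow> ('a \<Rightarrow> real) \<Rightarrow> ('a \<Rightarrow> ereal) \<Rightarrow> bool" where
  "compatible X T \<phi> V \<longleftrightarrow>
     (\<exists>k\<in>Ggt (nu X T \<phi>). \<exists>\<epsilon>>0. \<exists>\<eta>>0. \<forall>x\<in>X. \<forall>j.
        \<phi> ((T ^^ j) x) > nu X T \<phi> k - \<eta> \<longrightarrow> V ((T ^^ j) x) > ereal \<epsilon>)"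

end

theory Submission imports Defs begin

text \<open>All five conditions say that the sequence \<open>\<nu>\<close> eventually stays below a level \<open>c\<close> that it
  exceeds at some index \<open>k\<close>. A bound \<open>\<nu>\<^sub>n \<le> h(\<beta>\<^sup>n) \<rightarrow> h(0)\<close> or \<open>\<nu>\<^sub>n \<le> \<gamma>(\<theta>, n)\<close> forces this, and
  conversely such a level yields an affine \<open>h\<close>, a step function \<open>\<gamma>\<close>, and the Lyapunov function
  \<open>V(y) = sup\<^sub>i 2\<^sup>i\<^sup>-\<^sup>N [\<phi>(T\<^sup>i y) > c]\<close>, which is at most \<open>1\<close> on \<open>X\<close> (the indicator vanishes for
  \<open>i \<ge> N\<close>), halves along \<open>T\<close>, and is at least \<open>2\<^sup>-\<^sup>N\<close> wherever \<open>\<phi> > c\<close>.\<close>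

lemma Ggt_memI:
  assumes "\<forall>n\<ge>N. \<nu> n \<le> c" and "c < \<nu> k"
  shows "k \<in> Ggt \<nu>"
proof -
  have "eventually (\<lambda>n. ereal (\<nu> n) \<le> ereal c) sequentially"
    using assms(1) by (auto simp: eventually_sequentially)
  hence "limsup (\<lambda>n. ereal (\<nu> n)) \<le> ereal c" by (rule Limsup_bounded)
  also have "\<dots> < ereal (\<nu> k)" using assms(2) by simp
  finally show ?thesis by (simp add: Ggt_def)
qed

lemma Ggt_nonempty_iff: "Ggt \<nu> \<noteq> {} \<longleftrightarrow> (\<exists>c N k. (\<forall>n\<ge>N. \<nu> n \<le> c) \<and> c < \<nu> k)"
proof
  assume "Ggt \<nu> \<noteq> {}"
  then obtain k where "ereal (\<nu> k) > limsup (\<lambda>n. ereal (\<nu> n))" by (auto simp: Ggt_def)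
  then obtain c where c: "limsup (\<lambda>n. ereal (\<nu> n)) < ereal c" "ereal c < ereal (\<nu> k)"
    using ereal_dense2 by blast
  then have "eventually (\<lambda>n. ereal (\<nu> n) < ereal c) sequentially" using Limsup_lessD by blast
  then obtain N where "\<forall>n\<ge>N. \<nu> n < c" by (auto simp: eventually_sequentially)
  then show "\<exists>c N k. (\<forall>n\<ge>N. \<nu> n \<le> c) \<and> c < \<nu> k" using c(2)
    by (intro exI[of _ c] exI[of _ N] exI[of _ k]) auto
qed (auto intro: Ggt_memI)

lemma affine_in_Gamma:
  assumes "\<forall>n\<ge>N. \<nu> n \<le> c"
  shows "(\<lambda>t. c + ((\<bar>Max (\<nu> ` {..N})\<bar> + \<bar>c\<bar> + 1) * 2 ^ N) * t, 1/2) \<in> Gamma \<nu>"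
proof -
  define B where "B = \<bar>Max (\<nu> ` {..N})\<bar> + \<bar>c\<bar> + 1"
  have A: "B * 2 ^ N > 0" unfolding B_def by simp
  have "\<nu> n \<le> c + B * 2 ^ N * (1/2) ^ n" for n
  proof (cases "n \<ge> N")
    case True
    then show ?thesis using assms A by (simp add: add_increasing2)
  next
    case False
    have "\<nu> n \<le> Max (\<nu> ` {..N})" using False by (intro Max_ge) auto
    hence "\<nu> n - c \<le> B" unfolding B_def by linarith
    also have "B = B * 2 ^ N * (1/2) ^ N" by (simp add: power_one_over)
    also have "\<dots> \<le> B * 2 ^ N * (1/2) ^ n"
      using False A by (intro mult_left_mono power_decreasing) auto
    finally show ?thesis by simp
  qed
  moreover have "strict_mono_on {0..1} (\<lambda>t. c + B * 2 ^ N * t)"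
    using A by (auto simp: strict_mono_on_def intro: mult_strict_left_mono)
  moreover have "continuous_on {0..1} (\<lambda>t. c + B * 2 ^ N * t)"
    by (intro continuous_intros)
  ultimately show ?thesis unfolding Gamma_def B_def[symmetric] by auto
qed

lemma Ggt_nonempty_if_Gamma:
  assumes "(h, \<beta>) \<in> Gamma \<nu>" and "h 0 < \<nu> k"
  shows "Ggt \<nu> \<noteq> {}"
proof -
  have g: "continuous_on {0..1} h" "0 < \<beta>" "\<beta> < 1" "\<forall>k. \<nu> k \<le> h (\<beta> ^ k)"
    using assms(1) by (auto simp: Gamma_def)
  have "(\<lambda>n. h (\<beta> ^ n)) \<longlonglongrightarrow> h 0"
    using g by (intro continuous_on_tendsto_compose[OF g(1)] LIMSEQ_power_zero)
      (auto intro!: always_eventually power_le_one)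
  moreover define c where "c = (h 0 + \<nu> k) / 2"
  have "h 0 < c" "c < \<nu> k" using assms(2) unfolding c_def by auto
  ultimately have "eventually (\<lambda>n. h (\<beta> ^ n) < c) sequentially" using order_tendstoD(2) by blast
  then obtain N where "\<forall>n\<ge>N. h (\<beta> ^ n) < c" by (auto simp: eventually_sequentially)
  hence "\<forall>n\<ge>N. \<nu> n \<le> c" using g(4) by (meson less_imp_le order_trans)
  thus ?thesis using \<open>c < \<nu> k\<close> Ggt_nonempty_iff by blast
qed

lemma Ggt_nonempty_iff_Gamma:
  "Ggt \<nu> \<noteq> {} \<longleftrightarrow> (\<exists>(h, \<beta>)\<in>Gamma \<nu>. {k. \<nu> k > h 0} \<noteq> {})"
proof
  assume "Ggt \<nu> \<noteq> {}"
  then obtain c N k where "\<forall>n\<ge>N. \<nu> n \<le> c" "c < \<nu> k" using Ggt_nonempty_iff by blast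
  then show "\<exists>(h, \<beta>)\<in>Gamma \<nu>. {k. \<nu> k > h 0} \<noteq> {}"
    by (intro bexI[OF _ affine_in_Gamma]) auto
qed (auto dest: Ggt_nonempty_if_Gamma)

text \<open>The least index in the set defining \<open>Ks\<close> is a strict peak: at \<open>K = Suc K'\<close>, minimality
  of \<open>K\<close> rules out that the maximum over \<open>{0..K}\<close> is attained before \<open>K\<close>.\<close>

lemma Ks_peak:
  assumes "Ggt \<nu> \<noteq> {}"
  obtains K where "Ks \<nu> = enat K" "\<nu> K = Max (\<nu> ` {0..K})"
    "(SUP j\<in>{K<..}. ereal (\<nu> j)) < ereal (\<nu> K)"
proof -
  define S where "S = {k. ereal (Max (\<nu> ` {0..k})) > (SUP j\<in>{k<..}. ereal (\<nu> j))}"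
  obtain c N k where h: "\<forall>n\<ge>N. \<nu> n \<le> c" "c < \<nu> k" using assms Ggt_nonempty_iff by blast
  have "(SUP j\<in>{max k N<..}. ereal (\<nu> j)) \<le> ereal c"
    using h(1) by (intro SUP_least) auto
  also have "\<dots> < ereal (\<nu> k)" using h(2) by simp
  also have "\<nu> k \<le> Max (\<nu> ` {0..max k N})" by (intro Max_ge) auto
  finally have "max k N \<in> S" unfolding S_def by simp
  define K where "K = (LEAST k. k \<in> S)"
  have KS: "K \<in> S" unfolding K_def using \<open>max k N \<in> S\<close> by (rule LeastI)
  have Kmin: "\<And>j. j \<in> S \<Longrightarrow> K \<le> j" unfolding K_def by (rule Least_le)
  have "Ks \<nu> = enat K"
    unfolding Ks_def S_def[symmetric]
  proof (rule antisym)
    show "Inf (enat ` S) \<le> enat K" by (rule Inf_lower) (simp add: KS)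
    show "enat K \<le> Inf (enat ` S)" by (rule Inf_greatest) (auto dest: Kmin)
  qed
  define m where "m = Max (\<nu> ` {0..K})"
  define s where "s = (SUP j\<in>{K<..}. ereal (\<nu> j))"
  have ms: "s < ereal m" using KS unfolding S_def m_def s_def by simp
  have "\<nu> K = m"
  proof (cases K)
    case 0 then show ?thesis by (simp add: m_def)
  next
    case (Suc K')
    have "K' \<notin> S" using Kmin[of K'] Suc by auto
    hence before: "ereal (Max (\<nu> ` {0..K'})) \<le> (SUP j\<in>{K'<..}. ereal (\<nu> j))"
      unfolding S_def by simp
    have "{K'<..} = insert K {K<..}" using Suc by auto
    hence after: "(SUP j\<in>{K'<..}. ereal (\<nu> j)) = sup (ereal (\<nu> K)) s" by (simp add: s_def)
    have "{0..K} = insert K {0..K'}" using Suc by auto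
    hence m: "m = max (\<nu> K) (Max (\<nu> ` {0..K'}))" unfolding m_def by (simp add: Max_insert)
    show ?thesis
    proof (rule ccontr)
      assume "\<nu> K \<noteq> m"
      hence "\<nu> K < m" "m = Max (\<nu> ` {0..K'})" using m by auto
      hence "ereal m \<le> sup (ereal (\<nu> K)) s" using before after by simp
      hence "ereal m \<le> ereal (\<nu> K) \<or> ereal m \<le> s" by (simp add: le_max_iff_disj)
      thus False using \<open>\<nu> K < m\<close> ms by auto
    qed
  qed
  show thesis
  proof (rule that)
    show "\<nu> K = Max (\<nu> ` {0..K})" using \<open>\<nu> K = m\<close> by (simp add: m_def)
    show "(SUP j\<in>{K<..}. ereal (\<nu> j)) < ereal (\<nu> K)" using \<open>\<nu> K = m\<close> ms by (simp add: s_def)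
  qed fact
qed

lemma Ggt_nonempty_iff_frakF_finite:
  "Ggt \<nu> \<noteq> {} \<longleftrightarrow> (\<exists>(h, \<beta>)\<in>Gamma \<nu>. Ks \<nu> \<noteq> \<infinity> \<and>
     frakF \<nu> (the_enat (Ks \<nu>)) h \<beta> < \<infinity> \<and>
     nu_opt \<nu> = ereal (Max (\<nu> ` {0..the_enat (Ks \<nu>)})))"
proof
  assume "Ggt \<nu> \<noteq> {}"
  then obtain K where K: "Ks \<nu> = enat K" "\<nu> K = Max (\<nu> ` {0..K})"
    "(SUP j\<in>{K<..}. ereal (\<nu> j)) < ereal (\<nu> K)"
    by (rule Ks_peak)
  obtain c where c: "(SUP j\<in>{K<..}. ereal (\<nu> j)) < ereal c" "ereal c < ereal (\<nu> K)"
    using K(3) ereal_dense2 by blast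
  have tail: "ereal (\<nu> j) \<le> (SUP j\<in>{K<..}. ereal (\<nu> j))" if "K < j" for j
    using that by (intro SUP_upper) auto
  have "\<forall>n\<ge>Suc K. \<nu> n \<le> c"
  proof (intro allI impI)
    fix n assume "Suc K \<le> n"
    then have "ereal (\<nu> n) < ereal c" using order_le_less_trans[OF tail c(1)] by simp
    then show "\<nu> n \<le> c" by simp
  qed
  note G = affine_in_Gamma[OF this]
  have "nu_opt \<nu> = ereal (\<nu> K)"
    unfolding nu_opt_def
  proof (rule antisym[OF SUP_least SUP_upper])
    fix j
    show "ereal (\<nu> j) \<le> ereal (\<nu> K)"
    proof (cases "j \<le> K")
      case True
      then show ?thesis using K(2) by (simp add: Max_ge)
    next
      case False
      then show ?thesis using order_le_less_trans[OF tail K(3), of j] by simp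
    qed
  qed simp
  then show "\<exists>(h, \<beta>)\<in>Gamma \<nu>. Ks \<nu> \<noteq> \<infinity> \<and> frakF \<nu> (the_enat (Ks \<nu>)) h \<beta> < \<infinity> \<and>
      nu_opt \<nu> = ereal (Max (\<nu> ` {0..the_enat (Ks \<nu>)}))"
    using G c(2) K(1,2) by (intro bexI[OF _ G]) (auto simp: frakF_def)
next
  assume "\<exists>(h, \<beta>)\<in>Gamma \<nu>. Ks \<nu> \<noteq> \<infinity> \<and> frakF \<nu> (the_enat (Ks \<nu>)) h \<beta> < \<infinity> \<and>
      nu_opt \<nu> = ereal (Max (\<nu> ` {0..the_enat (Ks \<nu>)}))"
  then obtain h \<beta> where "(h, \<beta>) \<in> Gamma \<nu>" "frakF \<nu> (the_enat (Ks \<nu>)) h \<beta> < \<infinity>" by blast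
  then show "Ggt \<nu> \<noteq> {}"
    by (intro Ggt_nonempty_if_Gamma[of h \<beta> \<nu> "the_enat (Ks \<nu>)"])
      (auto simp: frakF_def split: if_splits)
qed

lemma nu_upper:
  assumes "bdd_above ((\<lambda>x. \<phi> ((T ^^ k) x)) ` X)" and "x \<in> X"
  shows "\<phi> ((T ^^ k) x) \<le> nu X T \<phi> k"
  unfolding nu_def using assms by (intro cSUP_upper)

lemma nu_least:
  assumes "X \<noteq> {}" and "\<And>x. x \<in> X \<Longrightarrow> \<phi> ((T ^^ k) x) \<le> c"
  shows "nu X T \<phi> k \<le> c"
  unfolding nu_def using assms by (rule cSUP_least)

lemma less_nu_iff:
  assumes "X \<noteq> {}" and "bdd_above ((\<lambda>x. \<phi> ((T ^^ k) x)) ` X)"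
  shows "c < nu X T \<phi> k \<longleftrightarrow> (\<exists>x\<in>X. c < \<phi> ((T ^^ k) x))"
  unfolding nu_def using assms by (rule less_cSUP_iff)

lemma KL_bound_if_Ggt_nonempty:
  fixes X :: "'a set"
  assumes "X \<noteq> {}" and bdd: "\<forall>k. bdd_above ((\<lambda>x. \<phi> ((T ^^ k) x)) ` X)"
    and "Ggt (nu X T \<phi>) \<noteq> {}"
  shows "\<exists>\<theta>\<in>Fin X. \<exists>\<gamma>\<in>KLgen.
     (\<forall>x\<in>X. \<forall>k::nat. \<phi> ((T ^^ k) x) \<le> \<gamma> (real_of_ereal (\<theta> x)) (real k)) \<and>
     (\<exists>n. (INF t\<in>{0::real..}. ereal (\<gamma> (real_of_ereal (SUP x\<in>X. \<theta> x)) t)) < ereal (nu X T \<phi> n))"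
proof -
  let ?\<nu> = "nu X T \<phi>"
  obtain c N k where tail: "\<forall>n\<ge>N. ?\<nu> n \<le> c" and peak: "c < ?\<nu> k"
    using assms(3) Ggt_nonempty_iff by blast
  define B where "B = max c (Max (?\<nu> ` {..N}))"
  define \<gamma> where "\<gamma> = (\<lambda>(s::real) (t::real). if t < real N then B else c)"
  define \<theta> where "\<theta> = (\<lambda>x::'a. 0::ereal)"
  have "\<theta> \<in> Fin X" using assms(1) by (simp add: Fin_def \<theta>_def)
  moreover have "\<gamma> \<in> KLgen"
    by (auto simp: KLgen_def \<gamma>_def mono_def monotone_on_def B_def)
  moreover have "\<phi> ((T ^^ j) x) \<le> \<gamma> (real_of_ereal (\<theta> x)) (real j)" if "x \<in> X" for x j
  proof (cases "j < N")
    case True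
    have "?\<nu> j \<le> Max (?\<nu> ` {..N})" using True by (intro Max_ge) auto
    also have "\<dots> \<le> B" by (simp add: B_def)
    finally show ?thesis using True nu_upper[OF bdd[rule_format] that, of j] by (simp add: \<gamma>_def)
  next
    case False
    then have "?\<nu> j \<le> c" using tail by simp
    then show ?thesis using False nu_upper[OF bdd[rule_format] that, of j] by (simp add: \<gamma>_def)
  qed
  moreover have "(INF t\<in>{0::real..}. ereal (\<gamma> (real_of_ereal (SUP x\<in>X. \<theta> x)) t)) < ereal (?\<nu> k)"
    unfolding INF_less_iff using peak by (intro bexI[of _ "real N"]) (auto simp: \<gamma>_def)
  ultimately show ?thesis by blast
qed

lemma Ggt_nonempty_if_KL_bound:
  fixes X :: "'a set"
  assumes "X \<noteq> {}" and "\<theta> \<in> Fin X" and "\<gamma> \<in> KLgen"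
    and bound: "\<forall>x\<in>X. \<forall>k::nat. \<phi> ((T ^^ k) x) \<le> \<gamma> (real_of_ereal (\<theta> x)) (real k)"
    and "(INF t\<in>{0::real..}. ereal (\<gamma> (real_of_ereal (SUP x\<in>X. \<theta> x)) t)) < ereal (nu X T \<phi> n)"
  shows "Ggt (nu X T \<phi>) \<noteq> {}"
proof -
  define \<Theta> where "\<Theta> = real_of_ereal (SUP x\<in>X. \<theta> x)"
  obtain t0 where t0: "t0 \<ge> 0" "\<gamma> \<Theta> t0 < nu X T \<phi> n"
    using assms(5) unfolding INF_less_iff \<Theta>_def by auto
  have \<theta>_le: "real_of_ereal (\<theta> x) \<le> \<Theta>" if "x \<in> X" for x
  proof -
    have "\<theta> x \<le> (SUP x\<in>X. \<theta> x)" using that by (rule SUP_upper)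
    moreover have "\<theta> x \<noteq> -\<infinity>" "(SUP x\<in>X. \<theta> x) < \<infinity>" using assms(2) by (auto simp: Fin_def)
    ultimately show ?thesis unfolding \<Theta>_def by (cases "\<theta> x"; cases "SUP x\<in>X. \<theta> x") auto
  qed
  have "nu X T \<phi> j \<le> \<gamma> \<Theta> t0" if "nat \<lceil>t0\<rceil> \<le> j" for j
  proof (rule nu_least[OF assms(1)])
    fix x assume x: "x \<in> X"
    have "\<phi> ((T ^^ j) x) \<le> \<gamma> (real_of_ereal (\<theta> x)) (real j)" using bound x by blast
    also have "\<dots> \<le> \<gamma> \<Theta> (real j)"
      using assms(3) \<theta>_le[OF x] by (auto simp: KLgen_def mono_def)
    also have "\<dots> \<le> \<gamma> \<Theta> t0"
      using assms(3) that t0(1) by (auto simp: KLgen_def monotone_on_def)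
    finally show "\<phi> ((T ^^ j) x) \<le> \<gamma> \<Theta> t0" .
  qed
  then show ?thesis using Ggt_nonempty_iff t0(2) by blast
qed

definition peak_lyapunov :: "('a \<Rightarrow> 'a) \<Rightarrow> ('a \<Rightarrow> real) \<Rightarrow> real \<Rightarrow> nat \<Rightarrow> 'a \<Rightarrow> ereal" where
  "peak_lyapunov T \<phi> c N y = (SUP i. if c < \<phi> ((T ^^ i) y) then ereal ((1/2) ^ N * 2 ^ i) else 0)"

lemma peak_lyapunov_term_le:
  "(if c < \<phi> ((T ^^ i) y) then ereal ((1/2) ^ N * 2 ^ i) else 0) \<le> peak_lyapunov T \<phi> c N y"
  unfolding peak_lyapunov_def by (rule SUP_upper) simp

lemma peak_lyapunov_nonneg: "0 \<le> peak_lyapunov T \<phi> c N y"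
  unfolding peak_lyapunov_def by (rule SUP_upper2[of 0]) auto

lemma peak_lyapunov_lower:
  assumes "c < \<phi> ((T ^^ i) y)"
  shows "ereal ((1/2) ^ N * 2 ^ i) \<le> peak_lyapunov T \<phi> c N y"
proof -
  have "(if c < \<phi> ((T ^^ i) y) then ereal ((1/2) ^ N * 2 ^ i) else 0) \<le> peak_lyapunov T \<phi> c N y"
    by (rule peak_lyapunov_term_le)
  then show ?thesis using assms by simp
qed

lemma peak_lyapunov_le_one:
  assumes "\<forall>i\<ge>N. \<phi> ((T ^^ i) y) \<le> c"
  shows "peak_lyapunov T \<phi> c N y \<le> 1"
  unfolding peak_lyapunov_def
proof (rule SUP_least)
  fix i
  show "(if c < \<phi> ((T ^^ i) y) then ereal ((1/2) ^ N * 2 ^ i) else 0) \<le> 1"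
  proof (cases "c < \<phi> ((T ^^ i) y)")
    case True
    then have "i \<le> N" using assms by (meson not_le order.strict_implies_order)
    then have "(1/2) ^ N * 2 ^ i \<le> (1/2::real) ^ N * 2 ^ N"
      by (intro mult_left_mono power_increasing) auto
    then show ?thesis using True by (simp add: power_one_over)
  qed simp
qed

lemma peak_lyapunov_step: "peak_lyapunov T \<phi> c N (T y) \<le> ereal (1/2) * peak_lyapunov T \<phi> c N y"
  unfolding peak_lyapunov_def[of T \<phi> c N "T y"]
proof (rule SUP_least)
  fix i
  have "(if c < \<phi> ((T ^^ i) (T y)) then ereal ((1/2) ^ N * 2 ^ i) else 0) =
      ereal (1/2) * (if c < \<phi> ((T ^^ Suc i) y) then ereal ((1/2) ^ N * 2 ^ Suc i) else 0)"
    by (simp add: funpow_swap1)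
  also have "\<dots> \<le> ereal (1/2) * peak_lyapunov T \<phi> c N y"
    by (intro ereal_mult_left_mono peak_lyapunov_term_le) auto
  finally show "(if c < \<phi> ((T ^^ i) (T y)) then ereal ((1/2) ^ N * 2 ^ i) else 0)
      \<le> ereal (1/2) * peak_lyapunov T \<phi> c N y" .
qed

lemma compatible_opt_lyapunov_if_Ggt_nonempty:
  fixes X :: "'a set"
  assumes "X \<noteq> {}" and bdd: "\<forall>k. bdd_above ((\<lambda>x. \<phi> ((T ^^ k) x)) ` X)"
    and "Ggt (nu X T \<phi>) \<noteq> {}"
  shows "\<exists>V. opt_lyapunov X T V \<and> compatible X T \<phi> V"
proof -
  let ?\<nu> = "nu X T \<phi>"
  obtain c N k where tail: "\<forall>n\<ge>N. ?\<nu> n \<le> c" and peak: "c < ?\<nu> k"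
    using assms(3) Ggt_nonempty_iff by blast
  define V where "V = peak_lyapunov T \<phi> c N"
  have "V x \<le> 1" if "x \<in> X" for x
    unfolding V_def using tail nu_upper[OF bdd[rule_format] that]
    by (intro peak_lyapunov_le_one) (meson order_trans)
  then have sup_le: "(SUP x\<in>X. V x) \<le> 1" by (rule SUP_least)
  obtain x0 where "x0 \<in> X" "c < \<phi> ((T ^^ k) x0)"
    using peak less_nu_iff[OF assms(1) bdd[rule_format]] by blast
  then have "ereal ((1/2) ^ N * 2 ^ k) \<le> V x0"
    using peak_lyapunov_lower[where c=c and \<phi>=\<phi> and T=T and i=k and y=x0 and N=N]
    unfolding V_def by simp
  then have "0 < V x0" by (rule order_less_le_trans[rotated]) simp
  then have "0 < (SUP x\<in>X. V x)" using \<open>x0 \<in> X\<close> by (auto simp: less_SUP_iff)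
  moreover have "V (T y) \<le> ereal (1/2) * V y" for y unfolding V_def by (rule peak_lyapunov_step)
  moreover have "0 \<le> V y" for y unfolding V_def by (rule peak_lyapunov_nonneg)
  ultimately have "opt_lyapunov X T V"
    unfolding opt_lyapunov_def using sup_le by (intro conjI allI exI[of _ "1/2"]) auto
  moreover have "V ((T ^^ j) x) > ereal ((1/2) ^ N / 2)" if "c < \<phi> ((T ^^ j) x)" for x j
  proof -
    have "ereal ((1/2) ^ N / 2) < ereal ((1/2) ^ N)" by simp
    also have "\<dots> \<le> V ((T ^^ j) x)"
      using that peak_lyapunov_lower[where c=c and \<phi>=\<phi> and T=T and i=0 and y="(T ^^ j) x" and N=N]
      unfolding V_def by simp
    finally show ?thesis .
  qed
  then have "compatible X T \<phi> V"
    unfolding compatible_def using Ggt_memI[OF tail peak] peak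
    by (intro bexI[of _ k] exI[of _ "(1/2) ^ N / 2"] conjI exI[of _ "?\<nu> k - c"]) auto
  ultimately show ?thesis by blast
qed

lemma Ggt_nonempty_iff_KL_bound:
  fixes X :: "'a set"
  assumes "X \<noteq> {}" and "\<forall>k. bdd_above ((\<lambda>x. \<phi> ((T ^^ k) x)) ` X)"
  shows "Ggt (nu X T \<phi>) \<noteq> {} \<longleftrightarrow> (\<exists>\<theta>\<in>Fin X. \<exists>\<gamma>\<in>KLgen.
     (\<forall>x\<in>X. \<forall>k::nat. \<phi> ((T ^^ k) x) \<le> \<gamma> (real_of_ereal (\<theta> x)) (real k)) \<and>
     (\<exists>n. (INF t\<in>{0::real..}. ereal (\<gamma> (real_of_ereal (SUP x\<in>X. \<theta> x)) t)) < ereal (nu X T \<phi> n)))"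
  using KL_bound_if_Ggt_nonempty[OF assms] Ggt_nonempty_if_KL_bound[OF assms(1)] by blast

lemma Ggt_nonempty_iff_compatible_opt_lyapunov:
  fixes X :: "'a set"
  assumes "X \<noteq> {}" and "\<forall>k. bdd_above ((\<lambda>x. \<phi> ((T ^^ k) x)) ` X)"
  shows "Ggt (nu X T \<phi>) \<noteq> {} \<longleftrightarrow> (\<exists>V. opt_lyapunov X T V \<and> compatible X T \<phi> V)"
  using compatible_opt_lyapunov_if_Ggt_nonempty[OF assms] by (auto simp: compatible_def)

theorem mainTheorem20:
  fixes X :: "(real ^ 'd) set" and T :: "real ^ 'd \<Rightarrow> real ^ 'd" and \<phi> :: "real ^ 'd \<Rightarrow> real"
  assumes "X \<noteq> {}"
    and "\<phi> 0 = 0"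
    and "\<forall>k. bdd_above ((\<lambda>x. \<phi> ((T ^^ k) x)) ` X)"
  shows "let \<nu> = nu X T \<phi>;
     P1 = (Ggt \<nu> \<noteq> {});
     P2 = (\<exists>(h, \<beta>)\<in>Gamma \<nu>. {k. \<nu> k > h 0} \<noteq> {});
     P3 = (\<exists>(h, \<beta>)\<in>Gamma \<nu>. Ks \<nu> \<noteq> \<infinity> \<and>
             frakF \<nu> (the_enat (Ks \<nu>)) h \<beta> < \<infinity> \<and>
             nu_opt \<nu> = ereal (Max (\<nu> ` {0..the_enat (Ks \<nu>)})));
     P4 = (\<exists>\<theta>\<in>Fin X. \<exists>\<gamma>\<in>KLgen.
             (\<forall>x\<in>X. \<forall>k::nat. \<phi> ((T ^^ k) x) \<le> \<gamma> (real_of_ereal (\<theta> x)) (real k)) \<and>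
             (\<exists>n. (INF t\<in>{0::real..}. ereal (\<gamma> (real_of_ereal (SUP x\<in>X. \<theta> x)) t)) < ereal (\<nu> n)));
     P5 = (\<exists>V. opt_lyapunov X T V \<and> compatible X T \<phi> V)
   in (P1 \<longleftrightarrow> P2) \<and> (P1 \<longleftrightarrow> P3) \<and> (P1 \<longleftrightarrow> P4) \<and> (P1 \<longleftrightarrow> P5)"
  unfolding Let_def
  by (intro conjI Ggt_nonempty_iff_Gamma Ggt_nonempty_iff_frakF_finite
      Ggt_nonempty_iff_KL_bound[OF assms(1,3)] Ggt_nonempty_iff_compatible_opt_lyapunov[OF assms(1,3)])

end
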